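(* Let $\mathfrak{s}$ be a simple Lie superalgebra. If $\mathfrak{s}=\bigoplus\mathfrak{s}^p$ is a grading of depth one and $\mathrm{der}(\mathfrak{s})=\bigoplus \mathrm{der}^p(\mathfrak{s})$ the associated grading of $\mathrm{der}(\mathfrak{s})$, then: (i) if $x\in\mathrm{der}^p(\mathfrak{s})$, $p\geq 0$, satisfies $[x,\mathfrak{s}^{-1}]=(0)$ then $x=0$; (ii) $\mathfrak{s}^0$ and $\mathfrak{s}^1$ are nonzero; (iii) the adjoint action of $\mathfrak{s}^{0}$ on $\mathfrak{s}^{-1}$ is irreducible of $G$-type; (iv) the depth $d(\mathrm{der}(\mathfrak{s}))\geq d(\mathfrak{s})$ and if the grading operator $D\in\mathfrak{h}$ then $d(\mathrm{der}(\mathfrak{s}))=d(\mathfrak{s})$; (v) if $x\in\mathfrak{s}^{-1}$ satisfies $[\mathfrak{s}^{0},x]=(0)$ then $x=0$.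
   Context: $\mathfrak{s}$ is a finite-dimensional complex simple Lie superalgebra with $\mathrm{der}(\mathfrak{s})=\mathfrak{s}\rtimes\mathrm{out}(\mathfrak{s})$ (semidirect sum with the inner derivations $\mathfrak{s}$ as ideal and a subalgebra $\mathrm{out}(\mathfrak{s})$ of outer derivations). A maximal torus of $\mathfrak{s}$ is conjugate to $\mathfrak{t}_{\mathfrak{s}}=\mathfrak{h}\oplus\mathfrak{t}_o$ with $\mathfrak{h}$ maximal toric in $\mathfrak{s}_{\bar 0}$ and $\mathfrak{t}_o$ maximal toric in $\mathrm{out}_{\bar 0}(\mathfrak{s})$; gradings correspond to grading operators $D\in\mathfrak{t}_{\mathfrak{s}}$. A grading has depth $d$ if $\mathfrak{s}^{-d}\neq0$ and $\mathfrak{s}^{p}=0$ for $p<-d$. A representation is irreducible of $G$-type if it has no nontrivial submodule, $\mathbb{Z}_2$-graded or not. *)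

theory Defs
  imports Complex_Main
begin

definition par_space :: "'a set \<Rightarrow> 'a set \<Rightarrow> nat \<Rightarrow> 'a set" where
  "par_space S0 S1 i = (if even i then S0 else S1)"

definition lie_superalgebra ::
  "(complex \<Rightarrow> 'a::ab_group_add \<Rightarrow> 'a) \<Rightarrow> 'a set \<Rightarrow> 'a set \<Rightarrow> ('a \<Rightarrow> 'a \<Rightarrow> 'a) \<Rightarrow> bool" where
  "lie_superalgebra sc S0 S1 br \<longleftrightarrow>
     vector_space sc \<and>
     module.subspace sc S0 \<and> module.subspace sc S1 \<and> S0 \<inter> S1 = {0} \<and>
     (\<forall>x. \<exists>x0\<in>S0. \<exists>x1\<in>S1. x = x0 + x1) \<and>
     (\<forall>y. Vector_Spaces.linear sc sc (\<lambda>x. br x y)) \<and>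
     (\<forall>x. Vector_Spaces.linear sc sc (br x)) \<and>
     (\<forall>i j x y. x \<in> par_space S0 S1 i \<longrightarrow> y \<in> par_space S0 S1 j \<longrightarrow>
        br x y \<in> par_space S0 S1 (i + j)) \<and>
     (\<forall>i j x y. x \<in> par_space S0 S1 i \<longrightarrow> y \<in> par_space S0 S1 j \<longrightarrow>
        br x y = - sc ((-1) ^ (i * j)) (br y x)) \<and>
     (\<forall>i j x y z. x \<in> par_space S0 S1 i \<longrightarrow> y \<in> par_space S0 S1 j \<longrightarrow>
        br x (br y z) = br (br x y) z + sc ((-1) ^ (i * j)) (br y (br x z)))"

definition finite_dim :: "(complex \<Rightarrow> 'a::ab_group_add \<Rightarrow> 'a) \<Rightarrow> bool" where
  "finite_dim sc \<longleftrightarrow> (\<exists>B. finite_dimensional_vector_space sc B)"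

definition graded_ideal ::
  "(complex \<Rightarrow> 'a::ab_group_add \<Rightarrow> 'a) \<Rightarrow> 'a set \<Rightarrow> 'a set \<Rightarrow> ('a \<Rightarrow> 'a \<Rightarrow> 'a) \<Rightarrow> 'a set \<Rightarrow> bool" where
  "graded_ideal sc S0 S1 br I \<longleftrightarrow>
     module.subspace sc I \<and>
     (\<forall>x\<in>I. \<exists>x0\<in>I \<inter> S0. \<exists>x1\<in>I \<inter> S1. x = x0 + x1) \<and>
     (\<forall>x y. y \<in> I \<longrightarrow> br x y \<in> I)"

definition simple_lie_superalgebra ::
  "(complex \<Rightarrow> 'a::ab_group_add \<Rightarrow> 'a) \<Rightarrow> 'a set \<Rightarrow> 'a set \<Rightarrow> ('a \<Rightarrow> 'a \<Rightarrow> 'a) \<Rightarrow> bool" where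
  "simple_lie_superalgebra sc S0 S1 br \<longleftrightarrow>
     lie_superalgebra sc S0 S1 br \<and> finite_dim sc \<and>
     (\<exists>x y. br x y \<noteq> 0) \<and>
     (\<forall>I. graded_ideal sc S0 S1 br I \<longrightarrow> I = {0} \<or> I = UNIV)"

definition hom_derivation ::
  "(complex \<Rightarrow> 'a::ab_group_add \<Rightarrow> 'a) \<Rightarrow> 'a set \<Rightarrow> 'a set \<Rightarrow> ('a \<Rightarrow> 'a \<Rightarrow> 'a) \<Rightarrow> nat \<Rightarrow> ('a \<Rightarrow> 'a) \<Rightarrow> bool" where
  "hom_derivation sc S0 S1 br i \<phi> \<longleftrightarrow>
     Vector_Spaces.linear sc sc \<phi> \<and>
     (\<forall>j x. x \<in> par_space S0 S1 j \<longrightarrow> \<phi> x \<in> par_space S0 S1 (i + j)) \<and>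
     (\<forall>j x y. x \<in> par_space S0 S1 j \<longrightarrow>
        \<phi> (br x y) = br (\<phi> x) y + sc ((-1) ^ (i * j)) (br x (\<phi> y)))"

definition der ::
  "(complex \<Rightarrow> 'a::ab_group_add \<Rightarrow> 'a) \<Rightarrow> 'a set \<Rightarrow> 'a set \<Rightarrow> ('a \<Rightarrow> 'a \<Rightarrow> 'a) \<Rightarrow> ('a \<Rightarrow> 'a) set" where
  "der sc S0 S1 br = {\<phi>. \<exists>\<phi>0 \<phi>1. hom_derivation sc S0 S1 br 0 \<phi>0 \<and> hom_derivation sc S0 S1 br 1 \<phi>1 \<and>
                          \<phi> = (\<lambda>x. \<phi>0 x + \<phi>1 x)}"

definition grading_operator ::
  "(complex \<Rightarrow> 'a::ab_group_add \<Rightarrow> 'a) \<Rightarrow> 'a set \<Rightarrow> 'a set \<Rightarrow> ('a \<Rightarrow> 'a \<Rightarrow> 'a) \<Rightarrow> ('a \<Rightarrow> 'a) \<Rightarrow> bool" where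
  "grading_operator sc S0 S1 br D \<longleftrightarrow>
     hom_derivation sc S0 S1 br 0 D \<and>
     (\<forall>x. x \<in> module.span sc (\<Union>p::int. {v. D v = sc (of_int p) v}))"

definition grade :: "(complex \<Rightarrow> 'a::ab_group_add \<Rightarrow> 'a) \<Rightarrow> ('a \<Rightarrow> 'a) \<Rightarrow> int \<Rightarrow> 'a set" where
  "grade sc D p = {x. D x = sc (of_int p) x}"

text \<open>Associated grading of der(s): der^p = {phi in der. [D, phi] = p phi}
(D is even, so the bracket in der(s) is the ordinary commutator).\<close>
definition der_grade ::
  "(complex \<Rightarrow> 'a::ab_group_add \<Rightarrow> 'a) \<Rightarrow> 'a set \<Rightarrow> 'a set \<Rightarrow> ('a \<Rightarrow> 'a \<Rightarrow> 'a) \<Rightarrow> ('a \<Rightarrow> 'a) \<Rightarrow> int \<Rightarrow> ('a \<Rightarrow> 'a) set" where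
  "der_grade sc S0 S1 br D p =
     {\<phi> \<in> der sc S0 S1 br. (\<lambda>x. D (\<phi> x) - \<phi> (D x)) = (\<lambda>x. sc (of_int p) (\<phi> x))}"

definition has_depth :: "(int \<Rightarrow> 'b set) \<Rightarrow> 'b \<Rightarrow> int \<Rightarrow> bool" where
  "has_depth g z d \<longleftrightarrow> g (-d) \<noteq> {z} \<and> (\<forall>p < -d. g p = {z})"

definition ad_semisimple ::
  "(complex \<Rightarrow> 'a::ab_group_add \<Rightarrow> 'a) \<Rightarrow> ('a \<Rightarrow> 'a \<Rightarrow> 'a) \<Rightarrow> 'a \<Rightarrow> bool" where
  "ad_semisimple sc br t \<longleftrightarrow> (\<forall>x. x \<in> module.span sc (\<Union>c::complex. {v. br t v = sc c v}))"

definition toral ::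
  "(complex \<Rightarrow> 'a::ab_group_add \<Rightarrow> 'a) \<Rightarrow> 'a set \<Rightarrow> ('a \<Rightarrow> 'a \<Rightarrow> 'a) \<Rightarrow> 'a set \<Rightarrow> bool" where
  "toral sc S0 br T \<longleftrightarrow> module.subspace sc T \<and> T \<subseteq> S0 \<and>
     (\<forall>a\<in>T. \<forall>b\<in>T. br a b = 0) \<and> (\<forall>t\<in>T. ad_semisimple sc br t)"

definition maximal_toral ::
  "(complex \<Rightarrow> 'a::ab_group_add \<Rightarrow> 'a) \<Rightarrow> 'a set \<Rightarrow> ('a \<Rightarrow> 'a \<Rightarrow> 'a) \<Rightarrow> 'a set \<Rightarrow> bool" where
  "maximal_toral sc S0 br T \<longleftrightarrow> toral sc S0 br T \<and>
     (\<forall>T'. toral sc S0 br T' \<and> T \<subseteq> T' \<longrightarrow> T' = T)"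

text \<open>Irreducible of G-type: V nonzero and no submodule (Z2-graded or not)
other than 0 and V under the action of A.\<close>
definition G_irreducible ::
  "(complex \<Rightarrow> 'a::ab_group_add \<Rightarrow> 'a) \<Rightarrow> ('a \<Rightarrow> 'a \<Rightarrow> 'a) \<Rightarrow> 'a set \<Rightarrow> 'a set \<Rightarrow> bool" where
  "G_irreducible sc act A V \<longleftrightarrow> V \<noteq> {0} \<and>
     (\<forall>W. module.subspace sc W \<and> W \<subseteq> V \<and> (\<forall>a\<in>A. \<forall>w\<in>W. act a w \<in> W) \<longrightarrow> W = {0} \<or> W = V)"

end

theory Submission
  imports Defs
begin

text \<open>Everything rests on transitivity: no nonzero element of nonnegative degree is
  annihilated by s^-1. For an s^0-submodule W of s^-1, the homogeneous y of degree q
  whose (q+1)-fold brackets with s^-1 all lie in W span an ideal I(W) (by the Jacobi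
  identity) with I(W) \<inter> s^-1 = W. Simplicity, although stated only for Z2-graded ideals,
  forces every ideal I to be trivial: I \<inter> \<pi>(I) and I + \<pi>(I) are graded for the parity
  automorphism \<pi>, and I \<oplus> \<pi>(I) = s would make the odd parts of elements of I central. So I(W) is 0 or s, which gives irreducibility (iii) and, for
  W = 0, transitivity. Transitivity yields (i) by induction on the degree, applied to the
  even and odd components of a derivation, and likewise (v); if s^0 or s^1 vanished, all
  higher degrees would vanish, making s abelian, resp. s^-1 a proper ideal (ii). For (iv),
  ad(s^-1) \<subseteq> der^-1 and finite dimensionality bound the depth; if D = ad h, a derivation x
  of degree p satisfies ad(x h) = -p x, so x h has degree p and x = 0 once p < -1.\<close>

lemma (in module) span_UN_subspaces_sum:
  assumes V: "\<And>q. subspace (V q)" and x: "x \<in> span (\<Union>q. V q)"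
  shows "\<exists>F w. finite F \<and> (\<forall>q. w q \<in> V q) \<and> x = sum w F"
proof -
  let ?is_sum = "\<lambda>x. \<exists>F w. finite F \<and> (\<forall>q. w q \<in> V q) \<and> x = sum w F"
  let ?sums = "Collect ?is_sum"
  have sums: "subspace ?sums"
  proof (rule subspaceI)
    show "0 \<in> ?sums"
      using subspace_0[OF V] by (intro CollectI exI[of _ "{}"] exI[of _ "\<lambda>_. 0"]) auto
  next
    fix x y assume "x \<in> ?sums" "y \<in> ?sums"
    then obtain F1 w1 F2 w2 where h: "finite F1" "\<forall>q. w1 q \<in> V q" "x = sum w1 F1"
      "finite F2" "\<forall>q. w2 q \<in> V q" "y = sum w2 F2" by auto
    let ?w = "\<lambda>q. (if q \<in> F1 then w1 q else 0) + (if q \<in> F2 then w2 q else 0)"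
    have "x + y = sum ?w (F1 \<union> F2)"
      using h by (simp add: sum.distrib sum.inter_restrict[symmetric] Int_absorb1)
    moreover have "\<forall>q. ?w q \<in> V q" using h subspace_add[OF V] subspace_0[OF V] by auto
    ultimately show "x + y \<in> ?sums"
      using h(1,4) by (intro CollectI exI[of _ "F1 \<union> F2"] exI[of _ ?w]) simp
  next
    fix c x assume "x \<in> ?sums"
    then obtain F w where h: "finite F" "\<forall>q. w q \<in> V q" "x = sum w F" by auto
    have "c *s x = (\<Sum>q\<in>F. c *s w q)" using h by (simp add: scale_sum_right)
    moreover have "\<forall>q. c *s w q \<in> V q" using h subspace_scale[OF V] by auto
    ultimately show "c *s x \<in> ?sums"
      using h(1) by (intro CollectI exI[of _ F] exI[of _ "\<lambda>q. c *s w q"]) simp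
  qed
  have base: "?is_sum v" if v: "v \<in> (\<Union>q. V q)" for v
  proof -
    obtain q where "v \<in> V q" using v by blast
    then show ?thesis using subspace_0[OF V]
      by (intro exI[of _ "{q}"] exI[of _ "\<lambda>p. if p = q then v else 0"]) auto
  qed
  show ?thesis by (rule span_induct[OF x sums base])
qed

lemma has_depth_exists:
  fixes g :: "int \<Rightarrow> 'b set"
  assumes nonzero: "g (-1) \<noteq> {z}" and bounded: "\<And>p. p < -M \<Longrightarrow> g p = {z}"
  shows "\<exists>d\<ge>1. has_depth g z d"
proof -
  define S where "S = {d. 1 \<le> d \<and> d \<le> M \<and> g (-d) \<noteq> {z}}"
  have "\<not> -1 < -M" using nonzero bounded by blast
  then have "1 \<in> S" using nonzero by (simp add: S_def)
  moreover have fin: "finite S" unfolding S_def by (rule finite_subset[of _ "{1..M}"]) auto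
  ultimately have max_in: "Max S \<in> S" by (intro Max_in) auto
  have below: "g p = {z}" if p: "p < - Max S" for p
  proof (rule ccontr)
    assume nz: "g p \<noteq> {z}"
    then have "\<not> p < -M" using bounded by blast
    moreover have "1 \<le> -p" using p max_in unfolding S_def by simp
    ultimately have "-p \<in> S" using nz unfolding S_def by simp
    then have "-p \<le> Max S" using fin by (simp add: Max_ge)
    then show False using p by simp
  qed
  from max_in have "1 \<le> Max S" "g (- Max S) \<noteq> {z}" by (simp_all add: S_def)
  with below show ?thesis unfolding has_depth_def by blast
qed

section \<open>Even and odd parts\<close>

locale super_lie =
  fixes sc :: "complex \<Rightarrow> 'a::ab_group_add \<Rightarrow> 'a" and S0 S1 :: "'a set"
    and br :: "'a \<Rightarrow> 'a \<Rightarrow> 'a"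
  assumes lie_superalgebra: "lie_superalgebra sc S0 S1 br"
begin

sublocale vector_space sc
  using lie_superalgebra by (simp add: lie_superalgebra_def)

sublocale vector_space_pair sc sc ..

lemma subspace_S0: "subspace S0" and subspace_S1: "subspace S1"
  and S0_Int_S1: "S0 \<inter> S1 = {0}" and even_odd_decomp: "\<exists>x0\<in>S0. \<exists>x1\<in>S1. x = x0 + x1"
  and linear_bracket_left: "Vector_Spaces.linear sc sc (\<lambda>x. br x y)"
  and linear_bracket_right: "Vector_Spaces.linear sc sc (br x)"
  using lie_superalgebra by (auto simp: lie_superalgebra_def)

lemma bracket_par_space:
    "x \<in> par_space S0 S1 i \<Longrightarrow> y \<in> par_space S0 S1 j \<Longrightarrow> br x y \<in> par_space S0 S1 (i + j)"
  and super_antisym: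
    "x \<in> par_space S0 S1 i \<Longrightarrow> y \<in> par_space S0 S1 j \<Longrightarrow> br x y = - sc ((-1) ^ (i * j)) (br y x)"
  and super_jacobi: "x \<in> par_space S0 S1 i \<Longrightarrow> y \<in> par_space S0 S1 j \<Longrightarrow>
      br x (br y z) = br (br x y) z + sc ((-1) ^ (i * j)) (br y (br x z))"
  using lie_superalgebra unfolding lie_superalgebra_def by blast+

lemma subspace_par_space: "subspace (par_space S0 S1 i)"
  by (simp add: par_space_def subspace_S0 subspace_S1)

lemma bracket_S0_S0: "x \<in> S0 \<Longrightarrow> y \<in> S0 \<Longrightarrow> br x y \<in> S0"
  and bracket_S0_S1: "x \<in> S0 \<Longrightarrow> y \<in> S1 \<Longrightarrow> br x y \<in> S1"
  and bracket_S1_S0: "x \<in> S1 \<Longrightarrow> y \<in> S0 \<Longrightarrow> br x y \<in> S1"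
  and bracket_S1_S1: "x \<in> S1 \<Longrightarrow> y \<in> S1 \<Longrightarrow> br x y \<in> S0"
  using bracket_par_space[of x 0 y 0] bracket_par_space[of x 0 y 1]
    bracket_par_space[of x 1 y 0] bracket_par_space[of x 1 y 1]
  by (simp_all add: par_space_def)

lemma bracket_add_left: "br (x + y) z = br x z + br y z"
  by (fact linear_add[OF linear_bracket_left])
lemma bracket_scale_left: "br (sc c x) z = sc c (br x z)"
  by (fact linear_scale[OF linear_bracket_left])
lemma bracket_zero_left [simp]: "br 0 z = 0"
  by (fact linear_0[OF linear_bracket_left])
lemma bracket_neg_left: "br (- x) z = - br x z"
  by (fact linear_neg[OF linear_bracket_left])
lemma bracket_diff_left: "br (x - y) z = br x z - br y z"
  by (fact linear_diff[OF linear_bracket_left])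
lemma bracket_sum_left: "br (sum g A) z = (\<Sum>a\<in>A. br (g a) z)"
  by (fact linear_sum[OF linear_bracket_left])
lemma bracket_add_right: "br z (x + y) = br z x + br z y"
  by (fact linear_add[OF linear_bracket_right])
lemma bracket_scale_right: "br z (sc c x) = sc c (br z x)"
  by (fact linear_scale[OF linear_bracket_right])
lemma bracket_zero_right [simp]: "br z 0 = 0"
  by (fact linear_0[OF linear_bracket_right])
lemma bracket_neg_right: "br z (- x) = - br z x"
  by (fact linear_neg[OF linear_bracket_right])
lemma bracket_diff_right: "br z (x - y) = br z x - br z y"
  by (fact linear_diff[OF linear_bracket_right])

lemmas bracket_additive = bracket_add_left bracket_add_right bracket_neg_left bracket_neg_right
  bracket_diff_left bracket_diff_right

lemma even_odd_sum_eq_0: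
  assumes a: "a \<in> S0" and b: "b \<in> S1" and ab: "a + b = 0"
  shows "a = 0 \<and> b = 0"
proof -
  have "a = - b" using ab by (simp add: eq_neg_iff_add_eq_0)
  then have "a \<in> S1" using subspace_neg[OF subspace_S1 b] by simp
  then have "a = 0" using a S0_Int_S1 by blast
  then show ?thesis using ab by simp
qed

definition even_part :: "'a \<Rightarrow> 'a" where "even_part x = (THE a. a \<in> S0 \<and> x - a \<in> S1)"
definition odd_part :: "'a \<Rightarrow> 'a" where "odd_part x = x - even_part x"

lemma even_odd_parts_unique:
  assumes "a \<in> S0" "b \<in> S1" "x = a + b"
  shows "even_part x = a" "odd_part x = b"
proof -
  have "(THE a. a \<in> S0 \<and> x - a \<in> S1) = a"
  proof (rule the_equality)
    show "a \<in> S0 \<and> x - a \<in> S1" using assms by simp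
    fix a' assume a': "a' \<in> S0 \<and> x - a' \<in> S1"
    have "(a' - a) + ((x - a') - b) = 0" using assms by (simp add: algebra_simps)
    moreover have "a' - a \<in> S0" using a' assms subspace_diff[OF subspace_S0] by blast
    moreover have "(x - a') - b \<in> S1" using a' assms subspace_diff[OF subspace_S1] by blast
    ultimately have "a' - a = 0" using even_odd_sum_eq_0 by blast
    then show "a' = a" by simp
  qed
  then show "even_part x = a" by (simp add: even_part_def)
  then show "odd_part x = b" using assms by (simp add: odd_part_def)
qed

lemma even_part_in: "even_part x \<in> S0" and odd_part_in: "odd_part x \<in> S1"
  and even_plus_odd: "even_part x + odd_part x = x"
proof -
  obtain a b where "a \<in> S0" "b \<in> S1" "x = a + b" using even_odd_decomp by blast
  then show "even_part x \<in> S0" "odd_part x \<in> S1" "even_part x + odd_part x = x"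
    using even_odd_parts_unique by auto
qed

lemma parts_of_even: "x \<in> S0 \<Longrightarrow> even_part x = x \<and> odd_part x = 0"
  using even_odd_parts_unique[of x 0 x] subspace_0[OF subspace_S1] by simp

lemma parts_of_odd: "x \<in> S1 \<Longrightarrow> even_part x = 0 \<and> odd_part x = x"
  using even_odd_parts_unique[of 0 x x] subspace_0[OF subspace_S0] by simp

lemma parts_add: "even_part (x + y) = even_part x + even_part y"
    "odd_part (x + y) = odd_part x + odd_part y"
proof -
  have "x + y = (even_part x + even_part y) + (odd_part x + odd_part y)"
    using even_plus_odd[of x] even_plus_odd[of y] by (simp add: algebra_simps)
  moreover have "even_part x + even_part y \<in> S0"
    using subspace_add[OF subspace_S0] even_part_in by blast
  moreover have "odd_part x + odd_part y \<in> S1"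
    using subspace_add[OF subspace_S1] odd_part_in by blast
  ultimately show "even_part (x + y) = even_part x + even_part y"
    "odd_part (x + y) = odd_part x + odd_part y"
    using even_odd_parts_unique by blast+
qed

lemma parts_scale: "even_part (sc c x) = sc c (even_part x)" "odd_part (sc c x) = sc c (odd_part x)"
proof -
  have "sc c x = sc c (even_part x) + sc c (odd_part x)"
    using even_plus_odd[of x] by (metis scale_right_distrib)
  moreover have "sc c (even_part x) \<in> S0" using subspace_scale[OF subspace_S0] even_part_in by blast
  moreover have "sc c (odd_part x) \<in> S1" using subspace_scale[OF subspace_S1] odd_part_in by blast
  ultimately show "even_part (sc c x) = sc c (even_part x)" "odd_part (sc c x) = sc c (odd_part x)"
    using even_odd_parts_unique by blast+
qed

lemma parts_zero: "even_part 0 = 0" "odd_part 0 = 0"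
  using parts_of_even subspace_0[OF subspace_S0] by auto

lemma even_part_par_space: "even_part x \<in> par_space S0 S1 0"
  and odd_part_par_space: "odd_part x \<in> par_space S0 S1 1"
  using even_part_in odd_part_in by (auto simp: par_space_def)

lemma bracket_split_left: "br x y = br (even_part x) y + br (odd_part x) y"
  using bracket_add_left[of "even_part x" "odd_part x" y] by (simp add: even_plus_odd)

lemma bracket_split_right: "br x y = br x (even_part y) + br x (odd_part y)"
  using bracket_add_right[of x "even_part y" "odd_part y"] by (simp add: even_plus_odd)

lemma super_jacobi_cases:
  "x \<in> S0 \<Longrightarrow> y \<in> S0 \<Longrightarrow> br x (br y z) = br (br x y) z + br y (br x z)"
  "x \<in> S0 \<Longrightarrow> y \<in> S1 \<Longrightarrow> br x (br y z) = br (br x y) z + br y (br x z)"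
  "x \<in> S1 \<Longrightarrow> y \<in> S0 \<Longrightarrow> br x (br y z) = br (br x y) z + br y (br x z)"
  "x \<in> S1 \<Longrightarrow> y \<in> S1 \<Longrightarrow> br x (br y z) = br (br x y) z - br y (br x z)"
  using super_jacobi[of x 0 y 0 z] super_jacobi[of x 0 y 1 z]
    super_jacobi[of x 1 y 0 z] super_jacobi[of x 1 y 1 z]
  by (auto simp: par_space_def)

lemma super_antisym_cases:
  "x \<in> S0 \<Longrightarrow> y \<in> S0 \<Longrightarrow> br x y = - br y x"
  "x \<in> S0 \<Longrightarrow> y \<in> S1 \<Longrightarrow> br x y = - br y x"
  "x \<in> S1 \<Longrightarrow> y \<in> S0 \<Longrightarrow> br x y = - br y x"
  "x \<in> S1 \<Longrightarrow> y \<in> S1 \<Longrightarrow> br x y = br y x"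
  using super_antisym[of x 0 y 0] super_antisym[of x 0 y 1]
    super_antisym[of x 1 y 0] super_antisym[of x 1 y 1]
  by (auto simp: par_space_def)

lemma jacobi:
  "br x (br y z) = br (br x y) z + br (even_part y) (br x z)
     + br (odd_part y) (br (even_part x) z) - br (odd_part y) (br (odd_part x) z)"
proof -
  let ?x0 = "even_part x" and ?x1 = "odd_part x" and ?y0 = "even_part y" and ?y1 = "odd_part y"
  have h: "?x0 \<in> S0" "?x1 \<in> S1" "?y0 \<in> S0" "?y1 \<in> S1" using even_part_in odd_part_in by auto
  have "br (?x0 + ?x1) (br (?y0 + ?y1) z)
      = br ?x0 (br ?y0 z) + br ?x0 (br ?y1 z) + br ?x1 (br ?y0 z) + br ?x1 (br ?y1 z)"
    by (simp add: bracket_additive algebra_simps)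
  also have "\<dots> = br (br (?x0 + ?x1) (?y0 + ?y1)) z + br ?y0 (br (?x0 + ?x1) z)
      + br ?y1 (br ?x0 z) - br ?y1 (br ?x1 z)"
    unfolding super_jacobi_cases(1)[OF h(1,3)] super_jacobi_cases(2)[OF h(1,4)]
      super_jacobi_cases(3)[OF h(2,3)] super_jacobi_cases(4)[OF h(2,4)]
    by (simp add: bracket_additive algebra_simps)
  finally show ?thesis by (simp add: even_plus_odd)
qed

lemma antisym:
  "br x y = - br (even_part y) x - br (odd_part y) (even_part x) + br (odd_part y) (odd_part x)"
proof -
  let ?x0 = "even_part x" and ?x1 = "odd_part x" and ?y0 = "even_part y" and ?y1 = "odd_part y"
  have h: "?x0 \<in> S0" "?x1 \<in> S1" "?y0 \<in> S0" "?y1 \<in> S1" using even_part_in odd_part_in by auto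
  have "br (?x0 + ?x1) (?y0 + ?y1) = br ?x0 ?y0 + br ?x0 ?y1 + br ?x1 ?y0 + br ?x1 ?y1"
    by (simp add: bracket_additive algebra_simps)
  also have "\<dots> = - br ?y0 (?x0 + ?x1) - br ?y1 ?x0 + br ?y1 ?x1"
    using super_antisym_cases(1)[OF h(1,3)] super_antisym_cases(2)[OF h(1,4)]
      super_antisym_cases(3)[OF h(2,3)] super_antisym_cases(4)[OF h(2,4)]
    by (simp add: bracket_additive algebra_simps)
  finally show ?thesis by (simp add: even_plus_odd)
qed

lemma parts_bracket:
  "even_part (br x y) = br (even_part x) (even_part y) + br (odd_part x) (odd_part y)"
  "odd_part (br x y) = br (even_part x) (odd_part y) + br (odd_part x) (even_part y)"
proof -
  let ?x0 = "even_part x" and ?x1 = "odd_part x" and ?y0 = "even_part y" and ?y1 = "odd_part y"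
  have h: "?x0 \<in> S0" "?x1 \<in> S1" "?y0 \<in> S0" "?y1 \<in> S1" using even_part_in odd_part_in by auto
  have "br x y = br (?x0 + ?x1) (?y0 + ?y1)" by (simp add: even_plus_odd)
  also have "\<dots> = (br ?x0 ?y0 + br ?x1 ?y1) + (br ?x0 ?y1 + br ?x1 ?y0)"
    by (simp add: bracket_additive algebra_simps)
  finally have split: "br x y = (br ?x0 ?y0 + br ?x1 ?y1) + (br ?x0 ?y1 + br ?x1 ?y0)" .
  have "br ?x0 ?y0 + br ?x1 ?y1 \<in> S0"
    using bracket_S0_S0 bracket_S1_S1 h subspace_add[OF subspace_S0] by blast
  moreover have "br ?x0 ?y1 + br ?x1 ?y0 \<in> S1"
    using bracket_S0_S1 bracket_S1_S0 h subspace_add[OF subspace_S1] by blast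
  ultimately show "even_part (br x y) = br ?x0 ?y0 + br ?x1 ?y1"
    "odd_part (br x y) = br ?x0 ?y1 + br ?x1 ?y0"
    using even_odd_parts_unique[OF _ _ split] by simp_all
qed

lemma bracket_eq_0_homogeneous_right:
  assumes a: "a \<in> S0 \<or> a \<in> S1" and "br a v = 0"
  shows "br a (even_part v) = 0 \<and> br a (odd_part v) = 0"
proof -
  have sum: "br a (even_part v) + br a (odd_part v) = 0"
    using assms(2) bracket_split_right[of a v] by simp
  from a show ?thesis
  proof
    assume "a \<in> S0"
    then show ?thesis
      using even_odd_sum_eq_0[OF bracket_S0_S0 bracket_S0_S1 sum] even_part_in odd_part_in by blast
  next
    assume "a \<in> S1"
    then have parts: "br a (odd_part v) \<in> S0" "br a (even_part v) \<in> S1"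
      using bracket_S1_S1 bracket_S1_S0 even_part_in odd_part_in by blast+
    show ?thesis
      using even_odd_sum_eq_0[OF parts] sum by (simp add: add.commute)
  qed
qed

lemma bracket_eq_0_homogeneous_left:
  assumes v: "v \<in> S0 \<or> v \<in> S1" and "br y v = 0"
  shows "br (even_part y) v = 0 \<and> br (odd_part y) v = 0"
proof -
  have sum: "br (even_part y) v + br (odd_part y) v = 0"
    using assms(2) bracket_split_left[of y v] by simp
  from v show ?thesis
  proof
    assume "v \<in> S0"
    then show ?thesis
      using even_odd_sum_eq_0[OF bracket_S0_S0 bracket_S1_S0 sum] even_part_in odd_part_in by blast
  next
    assume "v \<in> S1"
    then have parts: "br (odd_part y) v \<in> S0" "br (even_part y) v \<in> S1"
      using bracket_S1_S1 bracket_S0_S1 even_part_in odd_part_in by blast+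
    show ?thesis
      using even_odd_sum_eq_0[OF parts] sum by (simp add: add.commute)
  qed
qed

section \<open>Homogeneous derivations\<close>

lemma hom_derivation_linear: "hom_derivation sc S0 S1 br i \<phi> \<Longrightarrow> Vector_Spaces.linear sc sc \<phi>"
  and hom_derivation_par_space:
    "hom_derivation sc S0 S1 br i \<phi> \<Longrightarrow> a \<in> par_space S0 S1 j \<Longrightarrow> \<phi> a \<in> par_space S0 S1 (i + j)"
  and hom_derivation_leibniz: "hom_derivation sc S0 S1 br i \<phi> \<Longrightarrow> a \<in> par_space S0 S1 j \<Longrightarrow>
    \<phi> (br a b) = br (\<phi> a) b + sc ((-1) ^ (i * j)) (br a (\<phi> b))"
  unfolding hom_derivation_def by blast+

lemma hom_derivation_bracket:
  "a \<in> par_space S0 S1 i \<Longrightarrow> hom_derivation sc S0 S1 br i (br a)"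
  unfolding hom_derivation_def using linear_bracket_right bracket_par_space super_jacobi by blast

lemma hom_derivation_zero: "hom_derivation sc S0 S1 br i (\<lambda>_. 0)"
  by (auto simp: hom_derivation_def linear_zero subspace_0[OF subspace_par_space])

lemma der_linear: "\<phi> \<in> der sc S0 S1 br \<Longrightarrow> Vector_Spaces.linear sc sc \<phi>"
  by (auto simp: der_def hom_derivation_def intro: linear_compose_add)

lemma der_bracket_even:
  assumes "\<phi> \<in> der sc S0 S1 br" "h \<in> S0"
  shows "\<phi> (br h v) = br (\<phi> h) v + br h (\<phi> v)"
proof -
  obtain \<phi>0 \<phi>1 where hom: "hom_derivation sc S0 S1 br 0 \<phi>0" "hom_derivation sc S0 S1 br 1 \<phi>1"
    and \<phi>: "\<phi> = (\<lambda>x. \<phi>0 x + \<phi>1 x)"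
    using assms(1) by (auto simp: der_def)
  have "h \<in> par_space S0 S1 0" using assms(2) by (simp add: par_space_def)
  then have "\<phi>0 (br h v) = br (\<phi>0 h) v + br h (\<phi>0 v)" "\<phi>1 (br h v) = br (\<phi>1 h) v + br h (\<phi>1 v)"
    using hom_derivation_leibniz[OF hom(1)] hom_derivation_leibniz[OF hom(2)] by simp_all
  then show ?thesis by (simp add: \<phi> bracket_add_left bracket_add_right algebra_simps)
qed

text \<open>The even and odd components of a derivation are recovered from its values on
  homogeneous elements, since they shift parity by \<open>0\<close> and \<open>1\<close> respectively.\<close>

lemma hom_derivation_components:
  assumes \<phi>0: "hom_derivation sc S0 S1 br 0 \<phi>0" and \<phi>1: "hom_derivation sc S0 S1 br 1 \<phi>1"
  defines "\<phi> \<equiv> \<lambda>x. \<phi>0 x + \<phi>1 x"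
  shows "\<phi>0 v = even_part (\<phi> (even_part v)) + odd_part (\<phi> (odd_part v))"
    and "\<phi>1 v = odd_part (\<phi> (even_part v)) + even_part (\<phi> (odd_part v))"
proof -
  have in_par: "\<phi>0 (even_part v) \<in> S0" "\<phi>1 (even_part v) \<in> S1"
      "\<phi>1 (odd_part v) \<in> S0" "\<phi>0 (odd_part v) \<in> S1"
    using hom_derivation_par_space[OF \<phi>0 even_part_par_space, of v]
      hom_derivation_par_space[OF \<phi>1 even_part_par_space, of v]
      hom_derivation_par_space[OF \<phi>1 odd_part_par_space, of v]
      hom_derivation_par_space[OF \<phi>0 odd_part_par_space, of v]
    by (simp_all add: par_space_def)
  have split: "\<phi>0 v = \<phi>0 (even_part v) + \<phi>0 (odd_part v)" "\<phi>1 v = \<phi>1 (even_part v) + \<phi>1 (odd_part v)"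
    using linear_add[OF hom_derivation_linear[OF \<phi>0], of "even_part v" "odd_part v"]
      linear_add[OF hom_derivation_linear[OF \<phi>1], of "even_part v" "odd_part v"]
    by (simp_all add: even_plus_odd)
  show "\<phi>0 v = even_part (\<phi> (even_part v)) + odd_part (\<phi> (odd_part v))"
    "\<phi>1 v = odd_part (\<phi> (even_part v)) + even_part (\<phi> (odd_part v))"
    using even_odd_parts_unique[OF in_par(1,2), of "\<phi> (even_part v)"]
      even_odd_parts_unique[OF in_par(3,4), of "\<phi> (odd_part v)"] split
    by (simp_all add: \<phi>_def add.commute)
qed

section \<open>Ideals and the parity automorphism\<close>

definition parity_flip :: "'a \<Rightarrow> 'a" where "parity_flip x = even_part x - odd_part x"

lemma parts_parity_flip:
  "even_part (parity_flip x) = even_part x" "odd_part (parity_flip x) = - odd_part x"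
  using even_odd_parts_unique[of "even_part x" "- odd_part x" "parity_flip x"]
    even_part_in subspace_neg[OF subspace_S1 odd_part_in]
  by (simp_all add: parity_flip_def)

lemma parity_flip_involutive [simp]: "parity_flip (parity_flip x) = x"
  unfolding parity_flip_def[of "parity_flip x"]
  by (simp add: parts_parity_flip even_plus_odd)

lemma parity_flip_0 [simp]: "parity_flip 0 = 0"
  by (simp add: parity_flip_def parts_zero)

lemma parity_flip_add: "parity_flip (x + y) = parity_flip x + parity_flip y"
  by (simp add: parity_flip_def parts_add algebra_simps)

lemma parity_flip_scale: "parity_flip (sc c x) = sc c (parity_flip x)"
  by (simp add: parity_flip_def parts_scale scale_right_diff_distrib)

lemma parity_flip_diff: "parity_flip (x - y) = parity_flip x - parity_flip y"
  using parity_flip_add[of x "- y"] parity_flip_scale[of "-1" y] by simp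

lemma parity_flip_odd_part: "parity_flip (odd_part x) = - odd_part x"
  using parts_of_odd[OF odd_part_in] by (simp add: parity_flip_def)

lemma parity_flip_bracket: "parity_flip (br x y) = br (parity_flip x) (parity_flip y)"
  by (simp add: parity_flip_def parts_bracket bracket_additive algebra_simps)

lemma even_part_eq_half: "even_part v = sc (1/2) (v + parity_flip v)"
proof -
  have "v + parity_flip v = sc 2 (even_part v)"
    using even_plus_odd[of v] scale_left_distrib[of 1 1 "even_part v"]
    by (simp add: parity_flip_def algebra_simps)
  then show ?thesis by simp
qed

lemma odd_part_eq_half: "odd_part v = sc (1/2) (v - parity_flip v)"
proof -
  have "v - parity_flip v = sc 2 (odd_part v)"
    using even_plus_odd[of v] scale_left_distrib[of 1 1 "odd_part v"]
    by (simp add: parity_flip_def algebra_simps)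
  then show ?thesis by simp
qed

definition ideal :: "'a set \<Rightarrow> bool" where
  "ideal I \<longleftrightarrow> subspace I \<and> (\<forall>x y. y \<in> I \<longrightarrow> br x y \<in> I)"

lemma graded_ideal_iff: "graded_ideal sc S0 S1 br I \<longleftrightarrow>
    ideal I \<and> (\<forall>x\<in>I. even_part x \<in> I \<and> odd_part x \<in> I)"
proof -
  have "(\<exists>x0\<in>I \<inter> S0. \<exists>x1\<in>I \<inter> S1. x = x0 + x1) \<longleftrightarrow> even_part x \<in> I \<and> odd_part x \<in> I" for x
  proof
    assume "\<exists>x0\<in>I \<inter> S0. \<exists>x1\<in>I \<inter> S1. x = x0 + x1"
    then obtain x0 x1 where "x0 \<in> I" "x0 \<in> S0" "x1 \<in> I" "x1 \<in> S1" "x = x0 + x1" by blast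
    then show "even_part x \<in> I \<and> odd_part x \<in> I" using even_odd_parts_unique[of x0 x1 x] by simp
  next
    assume "even_part x \<in> I \<and> odd_part x \<in> I"
    then show "\<exists>x0\<in>I \<inter> S0. \<exists>x1\<in>I \<inter> S1. x = x0 + x1"
      by (intro bexI[of _ "even_part x"] bexI[of _ "odd_part x"])
        (auto simp: even_plus_odd even_part_in odd_part_in)
  qed
  then show ?thesis by (auto simp: graded_ideal_def ideal_def)
qed

text \<open>For an ideal \<open>I\<close>, \<open>I \<inter> parity_flip I\<close> and \<open>I + parity_flip I\<close> are graded ideals.\<close>

lemma graded_ideal_Int_flip:
  assumes "ideal I"
  shows "graded_ideal sc S0 S1 br {x. even_part x \<in> I \<and> odd_part x \<in> I}"
proof -
  have I: "subspace I" and closed: "\<And>x y. y \<in> I \<Longrightarrow> br x y \<in> I"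
    using assms by (auto simp: ideal_def)
  show ?thesis
    unfolding graded_ideal_iff ideal_def
    by (auto intro!: subspaceI simp: parts_zero parts_add parts_scale parts_bracket closed
        parts_of_even[OF even_part_in] parts_of_odd[OF odd_part_in]
        subspace_0[OF I] subspace_add[OF I] subspace_scale[OF I])
qed

lemma graded_ideal_plus_flip:
  assumes "ideal I"
  shows "graded_ideal sc S0 S1 br {a + parity_flip b |a b. a \<in> I \<and> b \<in> I}"
    (is "graded_ideal sc S0 S1 br ?K")
proof -
  have I: "subspace I" and closed: "\<And>x y. y \<in> I \<Longrightarrow> br x y \<in> I"
    using assms by (auto simp: ideal_def)
  have "subspace ?K"
  proof (rule subspaceI)
    show "0 \<in> ?K" using subspace_0[OF I] by force
  next
    fix x y assume "x \<in> ?K" "y \<in> ?K"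
    then obtain a b a' b' where "a \<in> I" "b \<in> I" "a' \<in> I" "b' \<in> I"
      "x = a + parity_flip b" "y = a' + parity_flip b'" by blast
    moreover have "x + y = (a + a') + parity_flip (b + b')"
      using \<open>x = a + parity_flip b\<close> \<open>y = a' + parity_flip b'\<close>
      by (simp add: parity_flip_add algebra_simps)
    ultimately show "x + y \<in> ?K" using subspace_add[OF I] by blast
  next
    fix c x assume "x \<in> ?K"
    then obtain a b where "a \<in> I" "b \<in> I" "x = a + parity_flip b" by blast
    moreover have "sc c x = sc c a + parity_flip (sc c b)"
      using \<open>x = a + parity_flip b\<close> by (simp add: parity_flip_scale scale_right_distrib)
    ultimately show "sc c x \<in> ?K" using subspace_scale[OF I] by blast
  qed
  moreover have "br x y \<in> ?K" if "y \<in> ?K" for x y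
  proof -
    obtain a b where "a \<in> I" "b \<in> I" "y = a + parity_flip b" using \<open>y \<in> ?K\<close> by blast
    moreover have "br x y = br x a + parity_flip (br (parity_flip x) b)"
      using \<open>y = a + parity_flip b\<close> by (simp add: bracket_add_right parity_flip_bracket)
    ultimately show ?thesis using closed by blast
  qed
  moreover have "even_part x \<in> ?K \<and> odd_part x \<in> ?K" if "x \<in> ?K" for x
  proof -
    obtain a b where ab: "a \<in> I" "b \<in> I" "x = a + parity_flip b" using \<open>x \<in> ?K\<close> by blast
    have "even_part x = sc (1/2) (a + b) + parity_flip (sc (1/2) (a + b))"
      by (simp add: even_part_eq_half ab(3) parity_flip_add parity_flip_scale
          scale_right_distrib algebra_simps)
    moreover have "odd_part x = sc (1/2) (a - b) + parity_flip (sc (1/2) (b - a))"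
      by (simp add: odd_part_eq_half ab(3) parity_flip_add parity_flip_diff parity_flip_scale
          scale_right_diff_distrib scale_right_distrib algebra_simps)
    ultimately show ?thesis
      using ab subspace_add[OF I] subspace_diff[OF I] subspace_scale[OF I] by blast
  qed
  ultimately show ?thesis by (auto simp: graded_ideal_iff ideal_def)
qed

end

locale simple_super_lie = super_lie +
  assumes simple: "simple_lie_superalgebra sc S0 S1 br"
begin

lemma nonabelian: "\<exists>x y. br x y \<noteq> 0"
  and graded_ideal_trivial: "graded_ideal sc S0 S1 br I \<Longrightarrow> I = {0} \<or> I = UNIV"
  and finite_dim: "finite_dim sc"
  using simple by (auto simp: simple_lie_superalgebra_def)

lemma center_trivial:
  assumes central: "\<And>x. br x z = 0"
  shows "z = 0"
proof -
  let ?Z = "{z. \<forall>x. br x z = 0}"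
  have "br x (even_part z) = 0 \<and> br x (odd_part z) = 0" if "z \<in> ?Z" for x z
    using that bracket_eq_0_homogeneous_right[of "even_part x" z]
      bracket_eq_0_homogeneous_right[of "odd_part x" z] even_part_in odd_part_in
      bracket_split_left[of x "even_part z"] bracket_split_left[of x "odd_part z"]
    by simp
  then have "graded_ideal sc S0 S1 br ?Z"
    unfolding graded_ideal_iff ideal_def
    by (auto intro!: subspaceI simp: bracket_add_right bracket_scale_right)
  moreover have "?Z \<noteq> UNIV" using nonabelian by auto
  ultimately have "?Z = {0}" using graded_ideal_trivial by blast
  then show ?thesis using central by auto
qed

lemma center_trivial_left:
  assumes central: "\<And>v. br y v = 0"
  shows "y = 0"
proof -
  have "br (even_part y) w = 0 \<and> br (odd_part y) w = 0" for w
  proof -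
    have "br (even_part y) u = 0 \<and> br (odd_part y) u = 0" if "u \<in> S0 \<or> u \<in> S1" for u
      using bracket_eq_0_homogeneous_left[OF that central] .
    then show ?thesis
      using even_part_in odd_part_in bracket_split_right[of "even_part y" w]
        bracket_split_right[of "odd_part y" w] by simp
  qed
  then have "br v y = 0" for v using antisym[of v y] by simp
  then show ?thesis using center_trivial by blast
qed

text \<open>If \<open>I\<close> and \<open>parity_flip I\<close> are complementary, the odd part of any \<open>a' \<in> I\<close>
  brackets both \<open>I\<close> and \<open>parity_flip I\<close> into \<open>I \<inter> parity_flip I = 0\<close>, hence is central.\<close>

lemma ideal_complementary_flip_zero:
  assumes I: "ideal I"
    and disjoint: "\<And>a. a \<in> I \<Longrightarrow> parity_flip a \<in> I \<Longrightarrow> a = 0"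
    and spanning: "\<And>x. \<exists>a\<in>I. \<exists>b\<in>I. x = a + parity_flip b"
    and "a' \<in> I"
  shows "a' = 0"
proof -
  have sub: "subspace I" and closed: "\<And>x y. y \<in> I \<Longrightarrow> br x y \<in> I"
    using I by (auto simp: ideal_def)
  have odd_kills: "br (odd_part a') (parity_flip a) = 0 \<and> br (odd_part a') a = 0"
    if a: "a \<in> I" for a
  proof -
    have "br a a' = - br (even_part a') a - br (odd_part a') (parity_flip a)"
      using antisym[of a a'] by (simp add: parity_flip_def bracket_additive algebra_simps)
    then have e: "br (odd_part a') (parity_flip a) = - br (even_part a') a - br a a'"
      by (simp add: algebra_simps)
    have "br (odd_part a') (parity_flip a) \<in> I"
      unfolding e using a \<open>a' \<in> I\<close> closed subspace_diff[OF sub] subspace_neg[OF sub] by simp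
    moreover have flip: "parity_flip (br (odd_part a') (parity_flip a)) = - br (odd_part a') a"
      by (simp add: parity_flip_bracket parity_flip_odd_part bracket_neg_left)
    moreover have "- br (odd_part a') a \<in> I" using closed a subspace_neg[OF sub] by simp
    ultimately have z: "br (odd_part a') (parity_flip a) = 0" using disjoint by simp
    with flip show ?thesis by simp
  qed
  have "br (odd_part a') x = 0" for x
  proof -
    obtain a b where "a \<in> I" "b \<in> I" "x = a + parity_flip b" using spanning by blast
    then show ?thesis using odd_kills[of a] odd_kills[of b] by (simp add: bracket_add_right)
  qed
  then have "odd_part a' = 0" by (rule center_trivial_left)
  then have "parity_flip a' = a'" using even_plus_odd[of a'] by (simp add: parity_flip_def)
  then show ?thesis using disjoint \<open>a' \<in> I\<close> by simp
qed

lemma ideal_trivial: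
  assumes I: "ideal I"
  shows "I = {0} \<or> I = UNIV"
proof -
  have sub: "subspace I" using I by (simp add: ideal_def)
  let ?J = "{x. even_part x \<in> I \<and> odd_part x \<in> I}"
  let ?K = "{a + parity_flip b |a b. a \<in> I \<and> b \<in> I}"
  have J: "?J = {0} \<or> ?J = UNIV" by (rule graded_ideal_trivial[OF graded_ideal_Int_flip[OF I]])
  have K: "?K = {0} \<or> ?K = UNIV" by (rule graded_ideal_trivial[OF graded_ideal_plus_flip[OF I]])
  show ?thesis
  proof (cases "?J = UNIV")
    case True
    have "x \<in> I" for x
      using True even_plus_odd[of x] subspace_add[OF sub, of "even_part x" "odd_part x"] by auto
    then show ?thesis by auto
  next
    case False
    then have J0: "?J = {0}" using J by blast
    have disjoint: "a = 0" if "a \<in> I" "parity_flip a \<in> I" for a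
    proof -
      have "even_part a \<in> I" "odd_part a \<in> I"
        using that subspace_add[OF sub] subspace_diff[OF sub] subspace_scale[OF sub]
        by (simp_all add: even_part_eq_half odd_part_eq_half)
      then show ?thesis using J0 by blast
    qed
    have "I \<subseteq> ?K"
    proof
      fix x assume "x \<in> I"
      then have "x = x + parity_flip 0 \<and> x \<in> I \<and> 0 \<in> I" using subspace_0[OF sub] by simp
      then show "x \<in> ?K" by blast
    qed
    show ?thesis
    proof (cases "?K = UNIV")
      case True
      then have "\<exists>a\<in>I. \<exists>b\<in>I. x = a + parity_flip b" for x by blast
      then have "a = 0" if "a \<in> I" for a
        using ideal_complementary_flip_zero[OF I disjoint _ that] by blast
      then show ?thesis using subspace_0[OF sub] by blast
    next
      case False
      then show ?thesis using K \<open>I \<subseteq> ?K\<close> subspace_0[OF sub] by blast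
    qed
  qed
qed

end

section \<open>Gradings\<close>

locale graded_super_lie = super_lie +
  fixes D :: "'a \<Rightarrow> 'a"
  assumes grading_operator: "grading_operator sc S0 S1 br D"
begin

abbreviation G :: "int \<Rightarrow> 'a set" where "G \<equiv> grade sc D"

lemma D_hom_derivation: "hom_derivation sc S0 S1 br 0 D"
  and span_grades: "x \<in> span (\<Union>p. G p)"
  using grading_operator by (auto simp: grading_operator_def grade_def)

lemma linear_D: "Vector_Spaces.linear sc sc D"
  using D_hom_derivation by (simp add: hom_derivation_def)

lemma D_par_space: "x \<in> par_space S0 S1 j \<Longrightarrow> D x \<in> par_space S0 S1 j"
  using D_hom_derivation by (simp add: hom_derivation_def)

lemma D_bracket: "D (br x y) = br (D x) y + br x (D y)"
proof -
  have leibniz: "D (br u y) = br (D u) y + br u (D y)" if "u \<in> par_space S0 S1 j" for u j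
    using D_hom_derivation that unfolding hom_derivation_def by simp
  have "D x = D (even_part x) + D (odd_part x)"
    using linear_add[OF linear_D, of "even_part x" "odd_part x"] by (simp add: even_plus_odd)
  then show ?thesis
    using leibniz[OF even_part_par_space, of x] leibniz[OF odd_part_par_space, of x]
      bracket_split_left[of x y] bracket_split_left[of x "D y"] linear_add[OF linear_D]
    by (simp add: bracket_add_left algebra_simps)
qed

lemma D_parts: "D (even_part x) = even_part (D x)" "D (odd_part x) = odd_part (D x)"
proof -
  have "D x = D (even_part x) + D (odd_part x)"
    using linear_add[OF linear_D, of "even_part x" "odd_part x"] by (simp add: even_plus_odd)
  moreover have "D (even_part x) \<in> S0" "D (odd_part x) \<in> S1"
    using D_par_space[OF even_part_par_space] D_par_space[OF odd_part_par_space]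
    by (simp_all add: par_space_def)
  ultimately show "D (even_part x) = even_part (D x)" "D (odd_part x) = odd_part (D x)"
    using even_odd_parts_unique[of "D (even_part x)" "D (odd_part x)" "D x"] by simp_all
qed

lemma subspace_grade: "subspace (G q)"
  by (rule subspaceI)
    (auto simp: grade_def linear_0[OF linear_D] linear_add[OF linear_D] linear_scale[OF linear_D]
      scale_right_distrib scale_left_commute)

lemma zero_in_grade: "0 \<in> G q"
  using subspace_0[OF subspace_grade] .

lemma parts_in_grade: "x \<in> G q \<Longrightarrow> even_part x \<in> G q" "x \<in> G q \<Longrightarrow> odd_part x \<in> G q"
  by (auto simp: grade_def D_parts parts_scale)

lemma bracket_grade:
  assumes "x \<in> G p" "y \<in> G q"
  shows "br x y \<in> G (p + q)"
proof -
  have "D (br x y) = br (sc (of_int p) x) y + br x (sc (of_int q) y)"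
    using assms by (simp add: D_bracket grade_def)
  also have "\<dots> = sc (of_int (p + q)) (br x y)"
    by (simp add: bracket_scale_left bracket_scale_right scale_left_distrib)
  finally show ?thesis by (simp add: grade_def)
qed

lemma grade_disjoint: "x \<in> G p \<Longrightarrow> x \<in> G q \<Longrightarrow> p \<noteq> q \<Longrightarrow> x = 0"
  by (simp add: grade_def)

lemma grade_decomposition: "\<exists>F w. finite F \<and> (\<forall>q. w q \<in> G q) \<and> x = sum w F"
  using span_UN_subspaces_sum[OF subspace_grade span_grades] .

lemma grades_independent:
  "finite F \<Longrightarrow> \<forall>q\<in>F. w q \<in> G q \<Longrightarrow> sum w F = 0 \<Longrightarrow> \<forall>q\<in>F. w q = 0"
proof (induction F arbitrary: w rule: finite_induct)
  case empty
  then show ?case by simp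
next
  case (insert p F)
  have D_sum: "D (sum w (insert p F)) = (\<Sum>q\<in>insert p F. sc (of_int q) (w q))"
    using insert(4) by (auto simp: linear_sum[OF linear_D] grade_def intro!: sum.cong)
  text \<open>Subtracting \<open>p\<close> times the relation from its image under \<open>D\<close> kills the \<open>p\<close>-component.\<close>
  have "(\<Sum>q\<in>insert p F. sc (of_int q - of_int p) (w q))
      = D (sum w (insert p F)) - sc (of_int p) (sum w (insert p F))"
    by (simp add: D_sum scale_left_diff_distrib sum_subtractf scale_sum_right)
  also have "\<dots> = 0" using insert(5) by (simp add: linear_0[OF linear_D])
  finally have "(\<Sum>q\<in>F. sc (of_int q - of_int p) (w q)) = 0"
    using insert(1,2) by simp
  then have "\<forall>q\<in>F. sc (of_int q - of_int p) (w q) = 0"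
    using insert.IH[of "\<lambda>q. sc (of_int q - of_int p) (w q)"] insert(4)
      subspace_scale[OF subspace_grade] by simp
  moreover have "(of_int q - of_int p :: complex) \<noteq> 0" if "q \<in> F" for q
    using that insert(2) by auto
  ultimately have "\<forall>q\<in>F. w q = 0" by simp
  moreover have "w p = 0" using insert(1,2,5) calculation by simp
  ultimately show ?case by simp
qed

lemma linear_eq_0_on_grades:
  assumes f: "Vector_Spaces.linear sc sc f" and zero: "\<And>q x. x \<in> G q \<Longrightarrow> f x = 0"
  shows "f x = 0"
proof -
  obtain F w where "finite F" "\<forall>q. w q \<in> G q" "x = sum w F" using grade_decomposition by blast
  then have "f x = (\<Sum>q\<in>F. f (w q))" by (simp add: linear_sum[OF f])
  also have "\<dots> = 0" using zero \<open>\<forall>q. w q \<in> G q\<close> by (intro sum.neutral) blast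
  finally show ?thesis .
qed

lemma subspace_contains_grades:
  assumes V: "subspace V" and grades: "\<And>q. G q \<subseteq> V"
  shows "x \<in> V"
proof -
  obtain F w where "finite F" "\<forall>q. w q \<in> G q" "x = sum w F" using grade_decomposition by blast
  then show ?thesis using grades by (auto intro!: subspace_sum[OF V])
qed

lemma independent_grade_representatives:
  assumes v: "\<And>q. q \<in> Q \<Longrightarrow> v q \<in> G q \<and> v q \<noteq> 0"
  shows "inj_on v Q" and "independent (v ` Q)"
proof -
  show inj: "inj_on v Q"
  proof (rule inj_onI)
    fix p q assume "p \<in> Q" "q \<in> Q" "v p = v q"
    then show "p = q" using v[of p] v[of q] grade_disjoint[of "v p" p q] by auto
  qed
  show "independent (v ` Q)"
  proof
    assume "dependent (v ` Q)"
    then obtain t u where t: "finite t" "t \<subseteq> v ` Q" "(\<Sum>x\<in>t. sc (u x) x) = 0" "\<exists>x\<in>t. u x \<noteq> 0"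
      unfolding dependent_explicit by blast
    define Q' where "Q' = {q \<in> Q. v q \<in> t}"
    have t_eq: "t = v ` Q'" using t(2) by (auto simp: Q'_def)
    have inj': "inj_on v Q'" using inj by (rule inj_on_subset) (auto simp: Q'_def)
    have "finite Q'" using t(1) finite_imageD[OF _ inj'] by (simp add: t_eq)
    moreover have "\<forall>q\<in>Q'. sc (u (v q)) (v q) \<in> G q"
      using v subspace_scale[OF subspace_grade] by (auto simp: Q'_def)
    moreover have "(\<Sum>q\<in>Q'. sc (u (v q)) (v q)) = 0"
      using t(3) sum.reindex[OF inj', of "\<lambda>x. sc (u x) x"] by (simp add: t_eq)
    ultimately have "\<forall>q\<in>Q'. sc (u (v q)) (v q) = 0" by (rule grades_independent)
    then have "\<forall>q\<in>Q'. u (v q) = 0" using v by (auto simp: Q'_def)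
    then show False using t(4) by (auto simp: t_eq)
  qed
qed

lemma finite_nonzero_grades:
  assumes "finite_dim sc"
  shows "finite {q. G q \<noteq> {0}}"
proof -
  obtain B where fd: "finite_dimensional_vector_space sc B"
    using assms unfolding finite_dim_def by blast
  define v where "v q = (SOME v. v \<in> G q \<and> v \<noteq> 0)" for q
  have v: "v q \<in> G q \<and> v q \<noteq> 0" if "q \<in> {q. G q \<noteq> {0}}" for q
  proof -
    have "\<exists>v. v \<in> G q \<and> v \<noteq> 0" using that zero_in_grade by blast
    then show ?thesis unfolding v_def by (rule someI_ex)
  qed
  have "finite (v ` {q. G q \<noteq> {0}})"
    by (rule finite_dimensional_vector_space.finiteI_independent[OF fd
          independent_grade_representatives(2)[OF v]])
  then show ?thesis by (rule finite_imageD[OF _ independent_grade_representatives(1)[OF v]])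
qed

lemma grades_bounded_above:
  assumes "finite_dim sc"
  shows "\<exists>N. \<forall>q>N. G q = {0}"
proof -
  let ?N = "Max (insert 0 {q. G q \<noteq> {0}})"
  have "q \<le> ?N" if "G q \<noteq> {0}" for q
    using finite_nonzero_grades[OF assms] that by (intro Max_ge) auto
  then have "\<forall>q > ?N. G q = {0}" by (meson not_le)
  then show ?thesis by (rule exI)
qed

lemma span_graded_subspaces_grade:
  assumes V: "\<And>q. subspace (V q)" "\<And>q. V q \<subseteq> G q"
    and x: "x \<in> span (\<Union>q. V q)" "x \<in> G p"
  shows "x \<in> V p"
proof -
  obtain F w where F: "finite F" and w: "\<forall>q. w q \<in> V q" and x_sum: "x = sum w F"
    using span_UN_subspaces_sum[OF V(1) x(1)] by blast
  define w0 where "w0 q = (if q \<in> F then w q else 0)" for q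
  have "sum w0 (insert p F) = x"
    using F by (cases "p \<in> F") (auto simp: x_sum w0_def insert_absorb intro!: sum.cong)
  then have "(\<Sum>q\<in>insert p F. w0 q - (if q = p then x else 0)) = 0"
    using F by (simp add: sum_subtractf)
  moreover have "w0 q \<in> G q" for q using w V(2) zero_in_grade by (auto simp: w0_def)
  moreover have "(if q = p then x else 0) \<in> G q" for q using x(2) zero_in_grade by auto
  ultimately have "w0 p - x = 0"
    using grades_independent[of "insert p F" "\<lambda>q. w0 q - (if q = p then x else 0)"] F
      subspace_diff[OF subspace_grade] by simp
  then show ?thesis using w subspace_0[OF V(1)] by (auto simp: w0_def split: if_splits)
qed

lemma der_gradeE:
  assumes "x \<in> der_grade sc S0 S1 br D p"
  obtains \<phi>0 \<phi>1 where "hom_derivation sc S0 S1 br 0 \<phi>0" "hom_derivation sc S0 S1 br 1 \<phi>1"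
    "x = (\<lambda>v. \<phi>0 v + \<phi>1 v)" "\<And>v. D (x v) - x (D v) = sc (of_int p) (x v)"
  using assms unfolding der_grade_def der_def by (auto dest: fun_cong)

lemma der_grade_linear: "x \<in> der_grade sc S0 S1 br D p \<Longrightarrow> Vector_Spaces.linear sc sc x"
  by (simp add: der_grade_def der_linear)

lemma zero_in_der_grade: "(\<lambda>_. 0) \<in> der_grade sc S0 S1 br D p"
  using hom_derivation_zero[of 0] hom_derivation_zero[of 1]
  by (auto simp: der_grade_def der_def linear_0[OF linear_D])

lemma der_grade_maps_grade:
  assumes x: "x \<in> der_grade sc S0 S1 br D p" and z: "z \<in> G q"
  shows "x z \<in> G (q + p)"
proof -
  have commute: "D (x v) - x (D v) = sc (of_int p) (x v)" for v
    using x by (auto simp: der_grade_def dest: fun_cong)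
  have "D (x z) = x (D z) + sc (of_int p) (x z)"
    using commute[of z] by (simp add: algebra_simps)
  also have "\<dots> = sc (of_int (q + p)) (x z)"
    using z linear_scale[OF der_grade_linear[OF x]] by (simp add: grade_def scale_left_distrib)
  finally show ?thesis by (simp add: grade_def)
qed

lemma der_grade_components_graded:
  assumes x: "x \<in> der_grade sc S0 S1 br D p" and hom: "hom_derivation sc S0 S1 br 0 \<phi>0"
    "hom_derivation sc S0 S1 br 1 \<phi>1" and x_eq: "x = (\<lambda>v. \<phi>0 v + \<phi>1 v)" and z: "z \<in> G q"
  shows "\<phi>0 z \<in> G (q + p)" "\<phi>1 z \<in> G (q + p)"
proof -
  have ev: "\<phi>0 (even_part z) + \<phi>1 (even_part z) \<in> G (q + p)"
    and od: "\<phi>0 (odd_part z) + \<phi>1 (odd_part z) \<in> G (q + p)"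
    using der_grade_maps_grade[OF x] parts_in_grade[OF z] by (auto simp: x_eq)
  show "\<phi>0 z \<in> G (q + p)"
    unfolding hom_derivation_components(1)[OF hom, of z]
    using parts_in_grade(1)[OF ev] parts_in_grade(2)[OF od] by (rule subspace_add[OF subspace_grade])
  show "\<phi>1 z \<in> G (q + p)"
    unfolding hom_derivation_components(2)[OF hom, of z]
    using parts_in_grade(2)[OF ev] parts_in_grade(1)[OF od] by (rule subspace_add[OF subspace_grade])
qed

lemma ad_in_der_grade:
  assumes y: "y \<in> G (-1)"
  shows "br y \<in> der_grade sc S0 S1 br D (-1)"
proof -
  have "br y = (\<lambda>v. br (even_part y) v + br (odd_part y) v)"
    by (rule ext) (rule bracket_split_left)
  then have "br y \<in> der sc S0 S1 br"
    unfolding der_def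
    using hom_derivation_bracket[OF even_part_par_space] hom_derivation_bracket[OF odd_part_par_space]
    by blast
  moreover have "D (br y v) - br y (D v) = sc (of_int (-1)) (br y v)" for v
    using y by (simp add: grade_def D_bracket bracket_neg_left)
  ultimately show ?thesis by (simp add: der_grade_def)
qed

end

section \<open>Gradings of depth one\<close>

locale depth_one_grading = simple_super_lie + graded_super_lie +
  assumes depth_one: "has_depth (grade sc D) 0 1"
begin

lemma grade_below_minus_one: "p < -1 \<Longrightarrow> G p = {0}"
  and grade_minus_one_nonzero: "G (-1) \<noteq> {0}"
  using depth_one by (auto simp: has_depth_def)

lemma grade_below_minus_one_eq_0: "p < -1 \<Longrightarrow> x \<in> G p \<Longrightarrow> x = 0"
  using grade_below_minus_one by blast

definition minus_one_submodule :: "'a set \<Rightarrow> bool" where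
  "minus_one_submodule W \<longleftrightarrow> subspace W \<and> W \<subseteq> G (-1) \<and> (\<forall>a\<in>G 0. \<forall>w\<in>W. br a w \<in> W)"

text \<open>\<open>lands_in W q\<close> consists of the \<open>y \<in> G q\<close> with \<open>[z\<^sub>1, [z\<^sub>2, \<dots> [z\<^sub>q\<^sub>+\<^sub>1, y]\<dots>]] \<in> W\<close>
  for all \<open>z\<^sub>i \<in> G (-1)\<close>. Their span is an ideal, and it meets \<open>G (-1)\<close> exactly in \<open>W\<close>.\<close>

definition lands_in :: "'a set \<Rightarrow> int \<Rightarrow> 'a set" where
  "lands_in W q =
     {y \<in> G q. \<forall>zs. set zs \<subseteq> G (-1) \<and> length zs = nat (q + 1) \<longrightarrow> foldr br zs y \<in> W}"

lemma foldr_bracket_add: "foldr br zs (x + y) = foldr br zs x + foldr br zs y"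
  by (induction zs) (auto simp: bracket_add_right)

lemma foldr_bracket_scale: "foldr br zs (sc c x) = sc c (foldr br zs x)"
  by (induction zs) (auto simp: bracket_scale_right)

lemma foldr_bracket_zero: "foldr br zs 0 = 0"
  by (induction zs) auto

lemma subspace_lands_in: "subspace W \<Longrightarrow> subspace (lands_in W q)"
  by (rule subspaceI)
    (auto simp: lands_in_def foldr_bracket_add foldr_bracket_scale foldr_bracket_zero zero_in_grade
      subspace_0 subspace_add subspace_scale subspace_add[OF subspace_grade]
      subspace_scale[OF subspace_grade])

lemma lands_in_grade: "lands_in W q \<subseteq> G q"
  by (auto simp: lands_in_def)

lemma lands_in_minus_one: "lands_in W (-1) = W \<inter> G (-1)"
  by (auto simp: lands_in_def)

lemma lands_in_step:
  assumes "0 \<le> q" "y \<in> G q" and step: "\<And>z. z \<in> G (-1) \<Longrightarrow> br z y \<in> lands_in W (q - 1)"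
  shows "y \<in> lands_in W q"
proof -
  have "foldr br zs y \<in> W" if zs: "set zs \<subseteq> G (-1)" "length zs = nat (q + 1)" for zs
  proof -
    obtain zs' z where zs_eq: "zs = zs' @ [z]"
      using zs(2) \<open>0 \<le> q\<close> by (cases zs rule: rev_exhaust) auto
    have "br z y \<in> lands_in W (q - 1)" using step zs(1) zs_eq by simp
    then show ?thesis using zs zs_eq \<open>0 \<le> q\<close> by (auto simp: lands_in_def)
  qed
  then show ?thesis using assms(2) by (simp add: lands_in_def)
qed

lemma bracket_minus_one_lands_in:
  assumes W: "subspace W" and z: "z \<in> G (-1)" and y: "y \<in> lands_in W q"
  shows "br z y \<in> lands_in W (q - 1)"
proof (cases "0 \<le> q")
  case False
  have "br z y \<in> G (q - 1)" using bracket_grade[OF z] y lands_in_grade by fastforce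
  then have "br z y = 0" using False grade_below_minus_one_eq_0[of "q - 1"] by simp
  then show ?thesis using subspace_0[OF subspace_lands_in[OF W]] by simp
next
  case True
  have "foldr br zs (br z y) \<in> W" if "set zs \<subseteq> G (-1)" "length zs = nat (q - 1 + 1)" for zs
  proof -
    have all: "\<And>zs. set zs \<subseteq> G (-1) \<Longrightarrow> length zs = nat (q + 1) \<Longrightarrow> foldr br zs y \<in> W"
      using y by (auto simp: lands_in_def)
    have "foldr br (zs @ [z]) y \<in> W" by (rule all) (use that z True in auto)
    then show ?thesis by simp
  qed
  moreover have "br z y \<in> G (q - 1)" using bracket_grade[OF z] y lands_in_grade by fastforce
  ultimately show ?thesis by (simp add: lands_in_def)
qed

lemma bracket_lands_in:
  assumes W: "minus_one_submodule W"
  shows "u \<in> G k \<Longrightarrow> y \<in> lands_in W q \<Longrightarrow> br u y \<in> lands_in W (k + q)"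
proof (induction "nat (k + q + 1)" arbitrary: k q u y rule: less_induct)
  case less
  have sub: "subspace W" and stable: "\<And>a w. a \<in> G 0 \<Longrightarrow> w \<in> W \<Longrightarrow> br a w \<in> W"
    using W by (auto simp: minus_one_submodule_def)
  have y: "y \<in> G q" using less(3) lands_in_grade by blast
  consider "k < -1 \<or> q < -1 \<or> k + q < -1" | "k = -1" | "k = 0" "q = -1" | "0 \<le> k" "0 \<le> k + q"
    by linarith
  then show ?case
  proof cases
    case 1
    then have "br u y = 0"
      using bracket_grade[OF less(2) y] less(2) y grade_below_minus_one_eq_0 by fastforce
    then show ?thesis using subspace_0[OF subspace_lands_in[OF sub]] by simp
  next
    case 2
    then show ?thesis using bracket_minus_one_lands_in[OF sub _ less(3), of u] less(2) by simp
  next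
    case 3
    then have "br u y \<in> W" using stable less(2,3) by (simp add: lands_in_minus_one)
    then show ?thesis using bracket_grade[OF less(2) y] 3 by (simp add: lands_in_minus_one)
  next
    case 4
    text \<open>Expand \<open>[z, [u, y]]\<close> by the Jacobi identity; each term has total degree \<open>k + q - 1\<close>.\<close>
    have "br z (br u y) \<in> lands_in W (k + q - 1)" if z: "z \<in> G (-1)" for z
    proof -
      have first: "br (br z u) y \<in> lands_in W (k + q - 1)"
        using less(1)[of "k - 1" q] bracket_grade[OF z less(2)] less(3) 4 by (simp add: algebra_simps)
      have rest: "br u' (br z' y) \<in> lands_in W (k + q - 1)"
        if "u' \<in> G k" "z' \<in> G (-1)" for u' z'
        using less(1)[of k "q - 1"] that bracket_minus_one_lands_in[OF sub _ less(3)] 4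
        by (simp add: algebra_simps)
      show ?thesis
        unfolding jacobi[of z u y]
        using first rest[OF parts_in_grade(1)[OF less(2)] z]
          rest[OF parts_in_grade(2)[OF less(2)] parts_in_grade(1)[OF z]]
          rest[OF parts_in_grade(2)[OF less(2)] parts_in_grade(2)[OF z]]
          subspace_add[OF subspace_lands_in[OF sub]] subspace_diff[OF subspace_lands_in[OF sub]]
        by simp
    qed
    then show ?thesis
      using lands_in_step[of "k + q"] bracket_grade[OF less(2) y] 4 by simp
  qed
qed

definition lands_in_span :: "'a set \<Rightarrow> 'a set" where
  "lands_in_span W = span (\<Union>q. lands_in W q)"

lemma ideal_lands_in_span:
  assumes W: "minus_one_submodule W"
  shows "ideal (lands_in_span W)"
proof -
  have homogeneous: "br u y \<in> lands_in_span W" if u: "u \<in> G k" and y: "y \<in> lands_in_span W" for u k y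
  proof -
    have "subspace {y. br u y \<in> lands_in_span W}"
      by (rule subspaceI)
        (auto simp: lands_in_span_def bracket_add_right bracket_scale_right span_add span_scale span_zero)
    moreover have "br u y' \<in> lands_in_span W" if "y' \<in> lands_in W q" for y' q
      using bracket_lands_in[OF W u that] unfolding lands_in_span_def by (blast intro: span_base)
    ultimately show ?thesis
      using span_induct[of y "\<Union>q. lands_in W q" "\<lambda>y. br u y \<in> lands_in_span W"] y
      by (auto simp: lands_in_span_def)
  qed
  have "br x y \<in> lands_in_span W" if "y \<in> lands_in_span W" for x y
  proof -
    obtain F u where "finite F" "\<forall>q. u q \<in> G q" "x = sum u F" using grade_decomposition by blast
    then show ?thesis
      using homogeneous[OF _ that] unfolding lands_in_span_def
      by (auto simp: bracket_sum_left intro!: span_sum)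
  qed
  then show ?thesis by (simp add: ideal_def lands_in_span_def)
qed

lemma lands_in_span_minus_one:
  assumes "subspace W" "x \<in> lands_in_span W" "x \<in> G (-1)"
  shows "x \<in> W"
proof -
  have "x \<in> lands_in W (-1)"
    using span_graded_subspaces_grade[of "lands_in W", OF subspace_lands_in[OF assms(1)]
        lands_in_grade] assms(2,3)
    unfolding lands_in_span_def by blast
  then show ?thesis by (simp add: lands_in_minus_one)
qed

lemma minus_one_submodule_trivial:
  assumes W: "minus_one_submodule W"
  shows "W = {0} \<or> W = G (-1)"
proof -
  have sub: "subspace W" and W_sub: "W \<subseteq> G (-1)" using W by (auto simp: minus_one_submodule_def)
  have W_span: "W \<subseteq> lands_in_span W"
  proof
    fix w assume "w \<in> W"
    then have "w \<in> lands_in W (-1)" using W_sub by (auto simp: lands_in_minus_one)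
    then show "w \<in> lands_in_span W" unfolding lands_in_span_def by (blast intro: span_base)
  qed
  consider "lands_in_span W = {0}" | "lands_in_span W = UNIV"
    using ideal_trivial[OF ideal_lands_in_span[OF W]] by blast
  then show ?thesis
  proof cases
    case 1
    then show ?thesis using W_span subspace_0[OF sub] by auto
  next
    case 2
    then have "G (-1) \<subseteq> W" using lands_in_span_minus_one[OF sub] by blast
    then show ?thesis using W_sub by auto
  qed
qed

lemma grade_nonneg_annihilated_eq_0:
  assumes "0 \<le> q" "a \<in> G q" and annihilated: "\<And>z. z \<in> G (-1) \<Longrightarrow> br z a = 0"
  shows "a = 0"
proof -
  have W: "minus_one_submodule {0}" by (simp add: minus_one_submodule_def zero_in_grade)
  have "a \<in> lands_in {0} q"
    using lands_in_step[OF assms(1,2)] annihilated subspace_0[OF subspace_lands_in] by simp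
  then have "a \<in> lands_in_span {0}" unfolding lands_in_span_def by (blast intro: span_base)
  moreover have "lands_in_span {0} \<noteq> UNIV"
  proof
    assume "lands_in_span {0} = UNIV"
    then have "G (-1) \<subseteq> {0}" using lands_in_span_minus_one[of "{0}"] by auto
    then show False using grade_minus_one_nonzero zero_in_grade by blast
  qed
  ultimately show ?thesis using ideal_trivial[OF ideal_lands_in_span[OF W]] by auto
qed

lemma der_grade_minus_one_nonzero: "der_grade sc S0 S1 br D (-1) \<noteq> {\<lambda>_. 0}"
proof -
  obtain y where y: "y \<in> G (-1)" "y \<noteq> 0" using grade_minus_one_nonzero zero_in_grade by blast
  have "br y \<noteq> (\<lambda>_. 0)"
  proof
    assume "br y = (\<lambda>_. 0)"
    then have "br y v = 0" for v by simp
    then have "y = 0" by (rule center_trivial_left)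
    then show False using y(2) by simp
  qed
  then show ?thesis using ad_in_der_grade[OF y(1)] by blast
qed

lemma hom_derivation_bracket_minus_one:
  assumes hom: "hom_derivation sc S0 S1 br i \<phi>"
    and annihilates: "\<And>y. y \<in> G (-1) \<Longrightarrow> \<phi> y = 0"
    and kills_brackets: "\<And>y. y \<in> G (-1) \<Longrightarrow> \<phi> (br y z) = 0" and y: "y \<in> G (-1)"
  shows "br y (\<phi> z) = 0"
proof -
  have "br y' (\<phi> z) = 0" if y': "y' \<in> G (-1)" "y' \<in> par_space S0 S1 j" for y' j
  proof -
    have "\<phi> (br y' z) = sc ((-1) ^ (i * j)) (br y' (\<phi> z))"
      using hom_derivation_leibniz[OF hom y'(2)] annihilates[OF y'(1)] by simp
    then show ?thesis using kills_brackets[OF y'(1)] by simp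
  qed
  then show ?thesis
    using bracket_split_left[of y "\<phi> z"] parts_in_grade[OF y]
      even_part_par_space[of y] odd_part_par_space[of y] by simp
qed

lemma hom_derivation_annihilating_minus_one_eq_0:
  assumes hom: "hom_derivation sc S0 S1 br i \<phi>" and "0 \<le> p"
    and graded: "\<And>q z. z \<in> G q \<Longrightarrow> \<phi> z \<in> G (q + p)"
    and annihilates: "\<And>y. y \<in> G (-1) \<Longrightarrow> \<phi> y = 0"
  shows "\<phi> v = 0"
proof -
  have nonneg: "\<phi> z = 0" if "z \<in> G (int n - 1)" for n z
    using that
  proof (induction n arbitrary: z)
    case 0
    then show ?case using annihilates by simp
  next
    case (Suc m)
    have "\<phi> (br y z) = 0" if "y \<in> G (-1)" for y
      using Suc.IH bracket_grade[OF that Suc.prems] by simp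
    then have "br y (\<phi> z) = 0" if "y \<in> G (-1)" for y
      using hom_derivation_bracket_minus_one[OF hom annihilates _ that] by blast
    moreover have "\<phi> z \<in> G (int m + p)" using graded Suc.prems by simp
    ultimately show ?case using grade_nonneg_annihilated_eq_0[of "int m + p" "\<phi> z"] \<open>0 \<le> p\<close> by simp
  qed
  show ?thesis
  proof (rule linear_eq_0_on_grades[OF hom_derivation_linear[OF hom]])
    fix q z assume z: "z \<in> G q"
    show "\<phi> z = 0"
    proof (cases "q < -1")
      case True
      then show ?thesis
        using z grade_below_minus_one_eq_0 linear_0[OF hom_derivation_linear[OF hom]] by blast
    next
      case False
      then have "q = int (nat (q + 1)) - 1" by simp
      then show ?thesis using nonneg[of z "nat (q + 1)"] z by simp
    qed
  qed
qed

lemma der_grade_annihilating_minus_one_eq_0: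
  assumes "0 \<le> p" and x: "x \<in> der_grade sc S0 S1 br D p"
    and annihilates: "\<And>y. y \<in> G (-1) \<Longrightarrow> x y = 0"
  shows "x = (\<lambda>_. 0)"
proof -
  obtain \<phi>0 \<phi>1 where hom: "hom_derivation sc S0 S1 br 0 \<phi>0" "hom_derivation sc S0 S1 br 1 \<phi>1"
    and x_eq: "x = (\<lambda>v. \<phi>0 v + \<phi>1 v)"
    using der_gradeE[OF x] by metis
  have sum_0: "\<phi>0 u + \<phi>1 u = 0" if "u \<in> G (-1)" for u
    using annihilates[OF that] by (simp add: x_eq)
  have "\<phi>0 y = 0 \<and> \<phi>1 y = 0" if "y \<in> G (-1)" for y
    using hom_derivation_components[OF hom, of y] sum_0 parts_in_grade[OF that] by (simp add: parts_zero)
  then have "\<phi>0 v = 0" "\<phi>1 v = 0" for v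
    using hom_derivation_annihilating_minus_one_eq_0[OF hom(1) \<open>0 \<le> p\<close>]
      hom_derivation_annihilating_minus_one_eq_0[OF hom(2) \<open>0 \<le> p\<close>]
      der_grade_components_graded[OF x hom x_eq] by blast+
  then show ?thesis by (simp add: x_eq)
qed

lemma grade_vanishes_above:
  assumes "0 \<le> m" "G m = {0}" "m \<le> q"
  shows "G q = {0}"
proof -
  have "G (m + int n) = {0}" for n
  proof (induction n)
    case 0
    then show ?case using assms(2) by simp
  next
    case (Suc n)
    have "a = 0" if a: "a \<in> G (m + int (Suc n))" for a
    proof (rule grade_nonneg_annihilated_eq_0[OF _ a])
      show "0 \<le> m + int (Suc n)" using assms(1) by simp
      fix z assume z: "z \<in> G (-1)"
      have "br z a \<in> G (m + int n)" using bracket_grade[OF z a] by (simp add: algebra_simps)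
      then show "br z a = 0" using Suc.IH by blast
    qed
    then show ?case using zero_in_grade by blast
  qed
  moreover have "q = m + int (nat (q - m))" using assms(3) by simp
  ultimately show ?thesis by metis
qed

lemma grade_zero_nonzero: "G 0 \<noteq> {0}"
proof
  assume "G 0 = {0}"
  then have "G q = {0}" if "0 \<le> q" for q using grade_vanishes_above[of 0 q] that by simp
  then have "G q \<subseteq> G (-1)" for q
  proof (cases "q = -1")
    case False
    then show ?thesis
      using \<open>\<And>q. 0 \<le> q \<Longrightarrow> G q = {0}\<close> grade_below_minus_one[of q] zero_in_grade
      by (cases "0 \<le> q") auto
  qed simp
  then have all: "x \<in> G (-1)" for x by (rule subspace_contains_grades[OF subspace_grade])
  obtain x y where "br x y \<noteq> 0" using nonabelian by blast
  moreover have "br x y \<in> G (-1 + -1)" using bracket_grade[OF all all] .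
  ultimately show False using grade_below_minus_one_eq_0[of "-1 + -1"] by simp
qed

lemma grade_one_nonzero: "G 1 \<noteq> {0}"
proof
  assume "G 1 = {0}"
  then have high: "G q = {0}" if "1 \<le> q" for q using grade_vanishes_above[of 1 q] that by simp
  have homogeneous: "br u y \<in> G (-1)" if u: "u \<in> G k" and y: "y \<in> G (-1)" for u y k
  proof -
    consider "k = 0" | "1 \<le> k" | "k < 0" by linarith
    then show ?thesis
    proof cases
      case 1
      then show ?thesis using bracket_grade[OF u y] by simp
    next
      case 2
      then have "u = 0" using high u by blast
      then show ?thesis using zero_in_grade by simp
    next
      case 3
      then have "br u y = 0" using bracket_grade[OF u y] grade_below_minus_one_eq_0[of "k + -1"] by simp
      then show ?thesis using zero_in_grade by simp
    qed
  qed
  then have "br x y \<in> G (-1)" if "y \<in> G (-1)" for x y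
  proof -
    obtain F w where "finite F" "\<forall>q. w q \<in> G q" "x = sum w F" using grade_decomposition by blast
    then show ?thesis
      using homogeneous[OF _ that] by (auto simp: bracket_sum_left intro!: subspace_sum[OF subspace_grade])
  qed
  then have "ideal (G (-1))" by (simp add: ideal_def subspace_grade)
  then have "G (-1) = {0} \<or> G (-1) = UNIV" by (rule ideal_trivial)
  moreover have "G (-1) \<noteq> UNIV"
  proof
    assume "G (-1) = UNIV"
    then have "G 0 \<subseteq> {0}" using grade_disjoint[of _ 0 "-1"] by auto
    then show False using grade_zero_nonzero zero_in_grade by blast
  qed
  ultimately show False using grade_minus_one_nonzero by blast
qed

lemma G_irreducible_minus_one: "G_irreducible sc br (G 0) (G (-1))"
  using grade_minus_one_nonzero minus_one_submodule_trivial
  by (auto simp: G_irreducible_def minus_one_submodule_def)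

lemma grade_minus_one_centralized_eq_0:
  assumes x: "x \<in> G (-1)" and centralized: "\<And>y. y \<in> G 0 \<Longrightarrow> br y x = 0"
  shows "x = 0"
proof -
  have minus_one: "br z x = 0" if "z \<in> G (-1)" for z
    using bracket_grade[OF that x] grade_below_minus_one_eq_0[of "-1 + -1"] by simp
  have nonneg: "br u x = 0" if "u \<in> G (int n)" for n u
    using that
  proof (induction n arbitrary: u)
    case 0
    then show ?case using centralized by simp
  next
    case (Suc m)
    text \<open>By Jacobi, \<open>[z, [u, x]] = [[z, u], x]\<close> for \<open>z \<in> G (-1)\<close>, and \<open>[z, u] \<in> G m\<close>.\<close>
    have "br z (br u x) = 0" if z: "z \<in> G (-1)" for z
      using jacobi[of z u x] Suc.IH[of "br z u"] bracket_grade[OF z Suc.prems]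
        minus_one[OF z] minus_one[OF parts_in_grade(1)[OF z]] minus_one[OF parts_in_grade(2)[OF z]]
      by simp
    then show ?case
      using grade_nonneg_annihilated_eq_0[of "int m"] bracket_grade[OF Suc.prems x] by simp
  qed
  have neg: "br u x = 0" if "u \<in> G q" "q < 0" for u q
    using bracket_grade[OF that(1) x] that(2) grade_below_minus_one_eq_0[of "q + -1"] by simp
  have "br u x = 0" for u
  proof (rule linear_eq_0_on_grades[OF linear_bracket_left])
    fix q u assume u: "u \<in> G q"
    show "br u x = 0"
    proof (cases "q < 0")
      case False
      then have "q = int (nat q)" by simp
      then show ?thesis using nonneg[of u "nat q"] u by simp
    qed (use u neg in blast)
  qed
  then show ?thesis by (rule center_trivial)
qed

lemma der_grade_bounded_below: "\<exists>M. \<forall>p < -M. der_grade sc S0 S1 br D p = {\<lambda>_. 0}"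
proof -
  obtain N where N: "\<And>q. q > N \<Longrightarrow> G q = {0}" using grades_bounded_above[OF finite_dim] by blast
  have vanish: "x v = 0" if p: "p < - (max N 0 + 1)" and x: "x \<in> der_grade sc S0 S1 br D p"
    for p x v
  proof (rule linear_eq_0_on_grades[OF der_grade_linear[OF x]])
    fix q z assume z: "z \<in> G q"
    show "x z = 0"
    proof (cases "q > N")
      case True
      then have "z = 0" using N z by blast
      then show ?thesis by (simp add: linear_0[OF der_grade_linear[OF x]])
    next
      case False
      then have "q + p < -1" using p by (simp add: max_def split: if_splits)
      then show ?thesis using grade_below_minus_one_eq_0 der_grade_maps_grade[OF x z] by blast
    qed
  qed
  have "der_grade sc S0 S1 br D p = {\<lambda>_. 0}" if p: "p < - (max N 0 + 1)" for p
  proof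
    show "der_grade sc S0 S1 br D p \<subseteq> {\<lambda>_. 0}"
    proof
      fix x assume x: "x \<in> der_grade sc S0 S1 br D p"
      show "x \<in> {\<lambda>_. 0}" using vanish[OF p x] by (simp add: fun_eq_iff)
    qed
    show "{\<lambda>_. 0} \<subseteq> der_grade sc S0 S1 br D p" using zero_in_der_grade by simp
  qed
  then have "\<forall>p < - (max N 0 + 1). der_grade sc S0 S1 br D p = {\<lambda>_. 0}" by blast
  then show ?thesis by (rule exI)
qed

lemma der_depth_exists: "\<exists>d\<ge>1. has_depth (der_grade sc S0 S1 br D) (\<lambda>_. 0) d"
proof -
  obtain M where M: "\<And>p. p < -M \<Longrightarrow> der_grade sc S0 S1 br D p = {\<lambda>_. 0}"
    using der_grade_bounded_below by blast
  show ?thesis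
    by (rule has_depth_exists[of "der_grade sc S0 S1 br D" "\<lambda>_. 0" M,
          OF der_grade_minus_one_nonzero M])
qed

lemma der_grade_inner_below_minus_one_eq_0:
  assumes h: "h \<in> S0" and D_eq: "D = br h" and "p < -1" and x: "x \<in> der_grade sc S0 S1 br D p"
  shows "x = (\<lambda>_. 0)"
proof -
  have commute: "br h (x v) - x (br h v) = sc (of_int p) (x v)" for v
    using x D_eq by (auto simp: der_grade_def dest: fun_cong)
  define y where "y = x h"
  have leibniz: "x (br h v) = br y v + br h (x v)" for v
    using der_bracket_even[OF _ h] x by (simp add: der_grade_def y_def)
  have ad_y: "br y v = - sc (of_int p) (x v)" for v
  proof -
    have "- br y v = sc (of_int p) (x v)" using commute[of v] leibniz[of v] by (simp add: algebra_simps)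
    then show ?thesis by (metis minus_minus)
  qed
  have "br (br h y - sc (of_int p) y) v = 0" for v
  proof -
    have "br (br h y) v = br h (br y v) - br y (br h v)"
      using jacobi[of h y v] parts_of_even[OF h] bracket_split_left[of y "br h v"] by simp
    also have "\<dots> = - sc (of_int p) (br h (x v) - x (br h v))"
      by (simp add: ad_y bracket_neg_right bracket_scale_right scale_right_diff_distrib)
    also have "\<dots> = br (sc (of_int p) y) v"
      by (simp add: commute bracket_scale_left ad_y)
    finally show ?thesis by (simp add: bracket_diff_left)
  qed
  then have "br h y = sc (of_int p) y" using center_trivial_left by fastforce
  then have "y = 0" using grade_below_minus_one_eq_0[OF \<open>p < -1\<close>] by (simp add: D_eq grade_def)
  then have "sc (of_int p) (x v) = 0" for v using ad_y[of v] by simp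
  then show ?thesis using \<open>p < -1\<close> by auto
qed

lemma der_depth_inner:
  assumes "h \<in> S0" "D = br h"
  shows "has_depth (der_grade sc S0 S1 br D) (\<lambda>_. 0) 1"
  using der_grade_minus_one_nonzero der_grade_inner_below_minus_one_eq_0[OF assms]
    zero_in_der_grade by (auto simp: has_depth_def)

end

theorem lemma3p10:
  fixes sc :: "complex \<Rightarrow> 'a::ab_group_add \<Rightarrow> 'a"
    and S0 S1 :: "'a set"
    and br :: "'a \<Rightarrow> 'a \<Rightarrow> 'a"
    and D :: "'a \<Rightarrow> 'a"
  assumes simple: "simple_lie_superalgebra sc S0 S1 br"
    and gradop: "grading_operator sc S0 S1 br D"
    and depth1: "has_depth (grade sc D) 0 1"
  shows "(\<forall>p x. p \<ge> 0 \<longrightarrow> x \<in> der_grade sc S0 S1 br D p \<longrightarrow>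
                (\<forall>y \<in> grade sc D (-1). x y = 0) \<longrightarrow> x = (\<lambda>_. 0))
       \<and> grade sc D 0 \<noteq> {0} \<and> grade sc D 1 \<noteq> {0}
       \<and> G_irreducible sc br (grade sc D 0) (grade sc D (-1))
       \<and> (\<exists>d \<ge> 1. has_depth (der_grade sc S0 S1 br D) (\<lambda>_. 0) d)
       \<and> ((\<exists>H h. maximal_toral sc S0 br H \<and> h \<in> H \<and> D = br h) \<longrightarrow>
            has_depth (der_grade sc S0 S1 br D) (\<lambda>_. 0) 1)
       \<and> (\<forall>x \<in> grade sc D (-1). (\<forall>y \<in> grade sc D 0. br y x = 0) \<longrightarrow> x = 0)"
proof -
  interpret depth_one_grading sc S0 S1 br D
    using simple gradop depth1
    by unfold_locales (simp_all add: simple_lie_superalgebra_def)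
  have inner: "has_depth (der_grade sc S0 S1 br D) (\<lambda>_. 0) 1"
    if "maximal_toral sc S0 br H" "h \<in> H" "D = br h" for H h
    using that der_depth_inner by (auto simp: maximal_toral_def toral_def)
  show ?thesis
    using der_grade_annihilating_minus_one_eq_0 grade_zero_nonzero grade_one_nonzero
      G_irreducible_minus_one der_depth_exists inner grade_minus_one_centralized_eq_0
    by blast
qed

end
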